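(* Let $\mathcal X\subseteq\mathbb R^n$, $\bm c\in\mathbb R^n$, $\varepsilon\in(0,1)$, scenarios $\bm\xi^1,\dots,\bm\xi^N$ with probabilities $p_1,\dots,p_N\ge0$, $\sum_i p_i=1$, and $g(\bm x,\bm\xi)=\max_{j\in[J]}g_j(\bm x,\bm\xi)$. Consider the chance-constrained program $$v^*=\min_{\bm x\in\mathcal X}\Big\{\bm c^\top\bm x:\ \sum_{i=1}^N p_i\,\mathbb I[g(\bm x,\bm\xi^i)\le 0]\ge 1-\varepsilon\Big\},$$ let $\bm x^*$ be an optimal solution, and define $I^*=\{i\in[N]: g(\bm x^*,\bm\xi^i)<0\}$. Suppose $\sum_{i\in I^*}p_i>1-\varepsilon$. Then $v^*=v^{\mathrm{CVaR}}_S$, and there exist $\widehat{\bm\alpha}\ge\bm e$, $\widehat\beta\le 0$, $\widehat{\bm s}\ge\bm 0$ such that $v^{\mathrm{CVaR}}_S=v^{\mathrm{CVaR}}(\widehat{\bm\alpha})$ and $(\bm x^*,\widehat\beta,\widehat{\bm s},\widehat{\bm\alpha})$ is an optimal solution of the optimally scaled CVaR approximation $$v^{\mathrm{CVaR}}_S=\inf_{\bm x\in\mathcal X,\beta\le0,\bm s\ge\bm0,\bm\alpha\ge\bm e}\Big\{\bm c^\top\bm x:\ \varepsilon\beta+\sum_{i=1}^Np_is_i\le0,\ s_i+\beta\ge\alpha_ig(\bm x,\bm\xi^i),\ i\in[N]\Big\}.$$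
   Context: $\mathbb I[\cdot]$ is the indicator function, $\bm e$ the all-ones vector, $[N]=\{1,\dots,N\}$. For $\bm\alpha\ge\bm e$, $v^{\mathrm{CVaR}}(\bm\alpha)=\min_{\bm x\in\mathcal X,\beta\le0,\bm s\ge\bm0}\{\bm c^\top\bm x:\ \varepsilon\beta+\sum_i p_is_i\le0,\ s_i+\beta\ge\alpha_i g(\bm x,\bm\xi^i),\ i\in[N]\}$ (value $+\infty$ if infeasible), and $v^{\mathrm{CVaR}}_S=\inf_{\bm\alpha\ge\bm e}v^{\mathrm{CVaR}}(\bm\alpha)$. *)

theory Defs
  imports "HOL-Analysis.Analysis"
begin

definition gmax :: "nat \<Rightarrow> (nat \<Rightarrow> real^'n \<Rightarrow> 'b \<Rightarrow> real) \<Rightarrow> real^'n \<Rightarrow> 'b \<Rightarrow> real" where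
  "gmax J gj x xi = Max ((\<lambda>j. gj j x xi) ` {1..J})"

definition cc_feasible ::
  "(real^'n) set \<Rightarrow> real \<Rightarrow> nat \<Rightarrow> (nat \<Rightarrow> 'b) \<Rightarrow> (nat \<Rightarrow> real)
   \<Rightarrow> (real^'n \<Rightarrow> 'b \<Rightarrow> real) \<Rightarrow> real^'n \<Rightarrow> bool" where
  "cc_feasible X eps N xi p g x \<longleftrightarrow>
     x \<in> X \<and> (\<Sum>i=1..N. p i * (if g x (xi i) \<le> 0 then 1 else 0)) \<ge> 1 - eps"

definition cvar_feasible ::
  "(real^'n) set \<Rightarrow> real \<Rightarrow> nat \<Rightarrow> (nat \<Rightarrow> 'b) \<Rightarrow> (nat \<Rightarrow> real)
   \<Rightarrow> (real^'n \<Rightarrow> 'b \<Rightarrow> real) \<Rightarrow> (nat \<Rightarrow> real)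
   \<Rightarrow> real^'n \<Rightarrow> real \<Rightarrow> (nat \<Rightarrow> real) \<Rightarrow> bool" where
  "cvar_feasible X eps N xi p g alpha x beta s \<longleftrightarrow>
     x \<in> X \<and> beta \<le> 0 \<and> (\<forall>i\<in>{1..N}. s i \<ge> 0) \<and>
     eps * beta + (\<Sum>i=1..N. p i * s i) \<le> 0 \<and>
     (\<forall>i\<in>{1..N}. s i + beta \<ge> alpha i * g x (xi i))"

text \<open>v^CVaR(alpha): infimum (in extended reals; +infinity if infeasible).\<close>
definition v_cvar ::
  "(real^'n) set \<Rightarrow> real^'n \<Rightarrow> real \<Rightarrow> nat \<Rightarrow> (nat \<Rightarrow> 'b) \<Rightarrow> (nat \<Rightarrow> real)
   \<Rightarrow> (real^'n \<Rightarrow> 'b \<Rightarrow> real) \<Rightarrow> (nat \<Rightarrow> real) \<Rightarrow> ereal" where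
  "v_cvar X c eps N xi p g alpha =
     (INF (x, beta, s) \<in> {(x, beta, s). cvar_feasible X eps N xi p g alpha x beta s}.
        ereal (c \<bullet> x))"

definition alpha_ok :: "nat \<Rightarrow> (nat \<Rightarrow> real) \<Rightarrow> bool" where
  "alpha_ok N alpha \<longleftrightarrow> (\<forall>i\<in>{1..N}. alpha i \<ge> 1)"

definition v_cvar_S ::
  "(real^'n) set \<Rightarrow> real^'n \<Rightarrow> real \<Rightarrow> nat \<Rightarrow> (nat \<Rightarrow> 'b) \<Rightarrow> (nat \<Rightarrow> real)
   \<Rightarrow> (real^'n \<Rightarrow> 'b \<Rightarrow> real) \<Rightarrow> ereal" where
  "v_cvar_S X c eps N xi p g = (INF alpha \<in> {alpha. alpha_ok N alpha}. v_cvar X c eps N xi p g alpha)"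

end

theory Submission
  imports Defs
begin

text \<open>
  Positive scalings keep the CVaR constraints a Markov-type inner approximation of the chance
  constraint: since \<open>\<beta> \<le> 0\<close>, every violated scenario has \<open>s\<^sub>i > -\<beta>\<close>, and
  \<open>\<Sum> p\<^sub>i s\<^sub>i \<le> \<epsilon> (-\<beta>)\<close> bounds their total probability by \<open>\<epsilon>\<close>. So no scaled CVaR solution
  beats \<open>x\<^sup>*\<close>. Conversely \<open>x\<^sup>*\<close> is feasible for a suitable scaling: on strictly satisfied
  scenarios a large \<open>\<alpha>\<^sub>i\<close> absorbs the shift \<open>\<beta> = -t\<close>, so \<open>s\<^sub>i = 0\<close> there; elsewhere
  \<open>s\<^sub>i = g\<^sub>i + t\<close>, and as the remaining mass is below \<open>\<epsilon>\<close> some \<open>t \<ge> 0\<close> balances the budget.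
  Only the values \<open>g(x, \<xi>\<^sup>i)\<close> enter.
\<close>

lemma sum_weight_above_threshold_le:
  fixes p s :: "'a \<Rightarrow> real"
  assumes "finite A" and p_nonneg: "\<forall>i\<in>A. 0 \<le> p i" and s_nonneg: "\<forall>i\<in>A. 0 \<le> s i"
    and "0 \<le> \<tau>" "0 \<le> eps"
    and budget: "(\<Sum>i\<in>A. p i * s i) \<le> eps * \<tau>"
  shows "(\<Sum>i\<in>{i\<in>A. \<tau> < s i}. p i) \<le> eps"
proof -
  let ?B = "{i\<in>A. \<tau> < s i}"
  have "finite ?B" using \<open>finite A\<close> by simp
  have terms_nonneg: "\<forall>i\<in>A. 0 \<le> p i * s i" using p_nonneg s_nonneg by simp
  have tail_le: "(\<Sum>i\<in>?B. p i * s i) \<le> eps * \<tau>"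
    using sum_mono2[OF \<open>finite A\<close>, of ?B "\<lambda>i. p i * s i"] terms_nonneg budget by fastforce
  show ?thesis
  proof (cases "\<tau> = 0")
    case True
    have "\<forall>i\<in>?B. p i * s i = 0"
      using tail_le True terms_nonneg sum_nonneg_eq_0_iff[OF \<open>finite ?B\<close>, of "\<lambda>i. p i * s i"]
        sum_nonneg[of ?B "\<lambda>i. p i * s i"]
      by simp
    then have "\<forall>i\<in>?B. p i = 0" using True by simp
    then show ?thesis using \<open>0 \<le> eps\<close> by simp
  next
    case False
    have "(\<Sum>i\<in>?B. p i) * \<tau> = (\<Sum>i\<in>?B. p i * \<tau>)" by (simp add: sum_distrib_right)
    also have "\<dots> \<le> (\<Sum>i\<in>?B. p i * s i)"
      using p_nonneg by (intro sum_mono) (simp add: mult_left_mono)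
    also have "\<dots> \<le> eps * \<tau>" by (fact tail_le)
    finally show ?thesis using False \<open>0 \<le> \<tau>\<close> by simp
  qed
qed

lemma cc_feasible_iff_violation_le:
  assumes p_sum: "(\<Sum>i=1..N. p i) = 1"
  shows "cc_feasible X eps N xi p g x \<longleftrightarrow>
    x \<in> X \<and> (\<Sum>i\<in>{i\<in>{1..N}. 0 < g x (xi i)}. p i) \<le> eps"
proof -
  have "(\<Sum>i=1..N. p i * (if g x (xi i) \<le> 0 then 1 else 0))
      = (\<Sum>i=1..N. p i) - (\<Sum>i\<in>{i\<in>{1..N}. 0 < g x (xi i)}. p i)"
    unfolding sum.inter_filter[OF finite_atLeastAtMost] sum_subtractf[symmetric]
    by (intro sum.cong) auto
  then show ?thesis using p_sum unfolding cc_feasible_def by linarith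
qed

lemma cvar_feasible_imp_cc_feasible:
  fixes g :: "real^'n \<Rightarrow> 'b \<Rightarrow> real"
  assumes feasible: "cvar_feasible X eps N xi p g alpha x beta s"
    and alpha_pos: "\<forall>i\<in>{1..N}. 0 < alpha i" and "0 < eps"
    and p_nonneg: "\<forall>i\<in>{1..N}. 0 \<le> p i" and p_sum: "(\<Sum>i=1..N. p i) = 1"
  shows "cc_feasible X eps N xi p g x"
proof -
  have "x \<in> X" and "beta \<le> 0" and s_nonneg: "\<forall>i\<in>{1..N}. 0 \<le> s i"
    and budget: "(\<Sum>i=1..N. p i * s i) \<le> eps * (- beta)"
    and scaled: "\<forall>i\<in>{1..N}. alpha i * g x (xi i) \<le> s i + beta"
    using feasible unfolding cvar_feasible_def by auto
  have "{i\<in>{1..N}. 0 < g x (xi i)} \<subseteq> {i\<in>{1..N}. - beta < s i}"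
  proof (intro subsetI CollectI conjI)
    fix i assume "i \<in> {i\<in>{1..N}. 0 < g x (xi i)}"
    then have "i \<in> {1..N}" and "0 < alpha i * g x (xi i)" using alpha_pos by auto
    moreover have "alpha i * g x (xi i) \<le> s i + beta" using scaled \<open>i \<in> {1..N}\<close> by blast
    ultimately show "i \<in> {1..N}" and "- beta < s i" by auto
  qed
  then have "(\<Sum>i\<in>{i\<in>{1..N}. 0 < g x (xi i)}. p i) \<le> (\<Sum>i\<in>{i\<in>{1..N}. - beta < s i}. p i)"
    using p_nonneg by (intro sum_mono2) auto
  also have "\<dots> \<le> eps"
    using \<open>beta \<le> 0\<close> \<open>0 < eps\<close> p_nonneg s_nonneg budget
    by (intro sum_weight_above_threshold_le) auto
  finally show ?thesis
    using \<open>x \<in> X\<close> cc_feasible_iff_violation_le[OF p_sum] by blast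
qed

lemma cvar_feasible_of_strict_satisfaction:
  fixes g :: "real^'n \<Rightarrow> 'b \<Rightarrow> real"
  assumes "x \<in> X"
    and p_nonneg: "\<forall>i\<in>{1..N}. 0 \<le> p i" and p_sum: "(\<Sum>i=1..N. p i) = 1"
    and strict: "(\<Sum>i\<in>{i\<in>{1..N}. g x (xi i) < 0}. p i) > 1 - eps"
  shows "\<exists>alpha beta s. alpha_ok N alpha \<and> cvar_feasible X eps N xi p g alpha x beta s"
proof -
  define S where "S = {i\<in>{1..N}. g x (xi i) < 0}"
  define V where "V = {1..N} - S"
  define margin where "margin = eps - (\<Sum>i\<in>V. p i)"
  define t where "t = (\<Sum>i\<in>V. p i * g x (xi i)) / margin"
  define alpha where "alpha i = (if g x (xi i) < 0 then 1 + t / - g x (xi i) else 1)" for i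
  define s where "s i = (if g x (xi i) < 0 then 0 else g x (xi i) + t)" for i
  have split_sum: "(\<Sum>i=1..N. f i) = (\<Sum>i\<in>V. f i) + (\<Sum>i\<in>S. f i)" for f :: "nat \<Rightarrow> real"
    unfolding V_def by (rule sum.subset_diff) (auto simp: S_def)
  have "margin > 0"
    using split_sum[of p] p_sum strict unfolding margin_def S_def by linarith
  moreover have "(\<Sum>i\<in>V. p i * g x (xi i)) \<ge> 0"
    using p_nonneg by (intro sum_nonneg) (auto simp: V_def S_def)
  ultimately have "t \<ge> 0" unfolding t_def by simp
  have "alpha_ok N alpha"
    using \<open>t \<ge> 0\<close> unfolding alpha_ok_def alpha_def by (simp add: divide_nonneg_neg)
  have "(\<Sum>i=1..N. p i * s i) = (\<Sum>i\<in>V. p i * g x (xi i)) + t * (\<Sum>i\<in>V. p i)"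
    using split_sum[of "\<lambda>i. p i * s i"]
    by (simp add: s_def S_def V_def sum.distrib sum_distrib_left algebra_simps)
  also have "\<dots> = eps * t"
    using \<open>margin > 0\<close> unfolding t_def margin_def by (simp add: field_simps)
  finally have "eps * - t + (\<Sum>i=1..N. p i * s i) \<le> 0" by simp
  moreover have "alpha i * g x (xi i) \<le> s i + - t" for i
    by (cases "g x (xi i) < 0") (auto simp: alpha_def s_def field_simps)
  moreover have "0 \<le> s i" for i
    using \<open>t \<ge> 0\<close> by (simp add: s_def)
  ultimately have "cvar_feasible X eps N xi p g alpha x (- t) s"
    using \<open>x \<in> X\<close> \<open>t \<ge> 0\<close> unfolding cvar_feasible_def by simp
  with \<open>alpha_ok N alpha\<close> show ?thesis by blast
qed

lemma v_cvar_le_feasible: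
  "cvar_feasible X eps N xi p g alpha x beta s \<Longrightarrow> v_cvar X c eps N xi p g alpha \<le> ereal (c \<bullet> x)"
  unfolding v_cvar_def by (rule INF_lower2[of "(x, beta, s)"]) auto

lemma v_cvar_S_le_v_cvar:
  "alpha_ok N alpha \<Longrightarrow> v_cvar_S X c eps N xi p g \<le> v_cvar X c eps N xi p g alpha"
  unfolding v_cvar_S_def by (rule INF_lower) simp

lemma ereal_le_v_cvar_S:
  assumes "\<And>alpha x beta s. alpha_ok N alpha \<Longrightarrow> cvar_feasible X eps N xi p g alpha x beta s \<Longrightarrow> v \<le> c \<bullet> x"
  shows "ereal v \<le> v_cvar_S X c eps N xi p g"
  unfolding v_cvar_S_def v_cvar_def using assms by (auto intro!: INF_greatest)

theorem theorem1:
  fixes X :: "(real^'n) set" and c :: "real^'n" and eps :: real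
    and N J :: nat and xi :: "nat \<Rightarrow> 'b" and p :: "nat \<Rightarrow> real"
    and gj :: "nat \<Rightarrow> real^'n \<Rightarrow> 'b \<Rightarrow> real" and xstar :: "real^'n"
  defines "g \<equiv> gmax J gj"
  assumes eps: "0 < eps" "eps < 1"
    and J: "J \<ge> 1"
    and p_nonneg: "\<forall>i\<in>{1..N}. p i \<ge> 0"
    and p_sum: "(\<Sum>i=1..N. p i) = 1"
    and xstar_feas: "cc_feasible X eps N xi p g xstar"
    and xstar_opt: "\<forall>x. cc_feasible X eps N xi p g x \<longrightarrow> c \<bullet> xstar \<le> c \<bullet> x"
    and Istar: "(\<Sum>i\<in>{i\<in>{1..N}. g xstar (xi i) < 0}. p i) > 1 - eps"
  shows "ereal (c \<bullet> xstar) = v_cvar_S X c eps N xi p g \<and>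
    (\<exists>alpha beta s. alpha_ok N alpha \<and> beta \<le> 0 \<and> (\<forall>i\<in>{1..N}. s i \<ge> 0) \<and>
       v_cvar_S X c eps N xi p g = v_cvar X c eps N xi p g alpha \<and>
       cvar_feasible X eps N xi p g alpha xstar beta s \<and>
       (\<forall>x beta' s' alpha'. alpha_ok N alpha' \<and> cvar_feasible X eps N xi p g alpha' x beta' s'
          \<longrightarrow> c \<bullet> xstar \<le> c \<bullet> x))"
proof -
  have "xstar \<in> X" using xstar_feas unfolding cc_feasible_def by simp
  then obtain alpha beta s where "alpha_ok N alpha"
    and feasible: "cvar_feasible X eps N xi p g alpha xstar beta s"
    using cvar_feasible_of_strict_satisfaction p_nonneg p_sum Istar by blast
  have optimal: "c \<bullet> xstar \<le> c \<bullet> x"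
    if "alpha_ok N alpha'" and "cvar_feasible X eps N xi p g alpha' x beta' s'" for x beta' s' alpha'
    using that cvar_feasible_imp_cc_feasible[OF _ _ eps(1) p_nonneg p_sum] xstar_opt
    unfolding alpha_ok_def by force
  have "ereal (c \<bullet> xstar) \<le> v_cvar_S X c eps N xi p g"
    using optimal by (rule ereal_le_v_cvar_S)
  moreover have "v_cvar_S X c eps N xi p g \<le> v_cvar X c eps N xi p g alpha"
    using \<open>alpha_ok N alpha\<close> by (rule v_cvar_S_le_v_cvar)
  moreover have "v_cvar X c eps N xi p g alpha \<le> ereal (c \<bullet> xstar)"
    using feasible by (rule v_cvar_le_feasible)
  ultimately show ?thesis
    using \<open>alpha_ok N alpha\<close> feasible optimal unfolding cvar_feasible_def
    by (intro conjI exI[of _ alpha] exI[of _ beta] exI[of _ s]) auto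
qed

end
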